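(* Let $a>0$, let $\psi\in C^2([0,a])$ with $\psi>0$ on $[0,a]$, let $0<R_1<R_2<a$, let $\beta>0$, set $\overline B:=\max_{[0,a]}\big|(\psi'/\psi)'\big|$, and for $B>\overline B$ let $z_1=z_1(r,B)$ be the solution of $$\Big[\frac{(\psi z)'}{\psi}\Big]'-Bz=0\ \text{ in }[0,R_1),\qquad z(0)=0,\ z'(0)=1,$$ and $z_2=z_2(r,B,\beta)$ the solution of $$\Big[\frac{(\psi z)'}{\psi}\Big]'-Bz=0\ \text{ in }(R_2,a],\qquad z(a)=\beta,\ z'(a)=-1.$$ Then: (i) $z_1>0$ in $(0,R_1)$; (ii) $z_1(\cdot,B)$ is increasing in $[0,R_1)$ for any $B>\overline B$; (iii) $B\mapsto z_1(r,B)$ is increasing on $(\overline B,\infty)$ for any $r\in(0,R_1)$; (iv) $\lim_{B\to\infty}z_1(r,B)=\infty$ for any $r\in(0,R_1)$. Similarly: (i') $z_2>\beta$ in $(R_2,a)$; (ii') $z_2(\cdot,B)$ is decreasing in $(R_2,a)$ for any $B>\overline B$; (iii') $B\mapsto z_2(r,B)$ is increasing on $(\overline B,\infty)$ for any $r\in(R_2,a)$; (iv') $\lim_{B\to\infty}z_2(r,B)=\infty$ for any $r\in(R_2,a)$.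
   Context: The differential equation can be written equivalently as $z''+\frac{\psi'}{\psi}z'+\big[(\psi'/\psi)'-B\big]z=0$. *)

theory Defs
  imports "HOL-Analysis.Analysis"
begin

end

theory Submission
  imports Defs
begin

text \<open>Writing \<open>q = (\<psi>'/\<psi>)'\<close>, the equation reads \<open>(\<psi> z')' = \<psi> (B - q) z\<close>, with
  \<open>B - q > 0\<close> for \<open>B > Bbar\<close>; the problem at \<open>a\<close> becomes one at \<open>0\<close> under \<open>r \<mapsto> a - r\<close>.
  Starting from \<open>z \<ge> 0\<close> with slope \<open>1\<close>, the flux \<open>\<psi> z'\<close> can only grow while it is positive,
  so it stays positive and \<open>z\<close> increases.  For \<open>B\<^sub>1 < B\<^sub>2\<close> the weighted Wronskian
  \<open>\<psi> (z\<^sub>2' z\<^sub>1 - z\<^sub>2 z\<^sub>1')\<close> vanishes at \<open>0\<close> and increases, so \<open>z\<^sub>2 / z\<^sub>1\<close> increases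
  from its limit \<open>1\<close> at \<open>0\<close>.  Integrating the equation three times from \<open>0\<close> gives
  \<open>z(r) \<ge> c (B - Bbar) r\<^sup>3\<close>, whence the divergence as \<open>B \<rightarrow> \<infinity>\<close>.\<close>

lemma DERIV_within_nonneg_imp_le:
  fixes f f' :: "real \<Rightarrow> real"
  assumes "x \<le> u" and sub: "{x..u} \<subseteq> S"
    and deriv: "\<And>s. s \<in> {x..u} \<Longrightarrow> (f has_real_derivative f' s) (at s within S)"
    and nonneg: "\<And>s. x < s \<Longrightarrow> s < u \<Longrightarrow> 0 \<le> f' s"
  shows "f x \<le> f u"
proof (rule DERIV_nonneg_imp_increasing_open[OF \<open>x \<le> u\<close>])
  have deriv_Icc: "(f has_real_derivative f' s) (at s within {x..u})" if "s \<in> {x..u}" for s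
    using has_field_derivative_subset[OF deriv[OF that] sub] .
  show "continuous_on {x..u} f"
    using DERIV_continuous_on[OF deriv_Icc] .
  fix s assume "x < s" "s < u"
  then have "(f has_real_derivative f' s) (at s)"
    using deriv_Icc[of s] by (simp add: at_within_Icc_at)
  with nonneg[OF \<open>x < s\<close> \<open>s < u\<close>] show "\<exists>y. DERIV f s :> y \<and> 0 \<le> y" by blast
qed

lemma DERIV_within_pos_imp_less:
  fixes f f' :: "real \<Rightarrow> real"
  assumes "x < u" and sub: "{x..u} \<subseteq> S"
    and deriv: "\<And>s. s \<in> {x..u} \<Longrightarrow> (f has_real_derivative f' s) (at s within S)"
    and pos: "\<And>s. x < s \<Longrightarrow> s < u \<Longrightarrow> 0 < f' s"
  shows "f x < f u"
proof (rule DERIV_pos_imp_increasing_open[OF \<open>x < u\<close>])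
  have deriv_Icc: "(f has_real_derivative f' s) (at s within {x..u})" if "s \<in> {x..u}" for s
    using has_field_derivative_subset[OF deriv[OF that] sub] .
  show "continuous_on {x..u} f"
    using DERIV_continuous_on[OF deriv_Icc] .
  fix s assume "x < s" "s < u"
  then have "(f has_real_derivative f' s) (at s)"
    using deriv_Icc[of s] by (simp add: at_within_Icc_at)
  with pos[OF \<open>x < s\<close> \<open>s < u\<close>] show "\<exists>y. DERIV f s :> y \<and> 0 < y" by blast
qed

lemma DERIV_ge_power_imp_ge:
  fixes f f' :: "real \<Rightarrow> real"
  assumes "0 \<le> s" and sub: "{0..s} \<subseteq> S" and "0 \<le> f 0"
    and deriv: "\<And>u. u \<in> {0..s} \<Longrightarrow> (f has_real_derivative f' u) (at u within S)"
    and bound: "\<And>u. 0 < u \<Longrightarrow> u < s \<Longrightarrow> c * u ^ n \<le> f' u"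
  shows "c * s ^ Suc n / Suc n \<le> f s"
proof -
  have "f 0 - c * 0 ^ Suc n / Suc n \<le> f s - c * s ^ Suc n / Suc n"
  proof (rule DERIV_within_nonneg_imp_le[OF \<open>0 \<le> s\<close> sub])
    fix u assume "u \<in> {0..s}"
    show "((\<lambda>u. f u - c * u ^ Suc n / Suc n) has_real_derivative f' u - c * u ^ n) (at u within S)"
      by (rule derivative_eq_intros deriv[OF \<open>u \<in> {0..s}\<close>] | simp)+
  qed (use bound in auto)
  with \<open>0 \<le> f 0\<close> show ?thesis by simp
qed

definition ivp_solution ::
    "real \<Rightarrow> (real \<Rightarrow> real) \<Rightarrow> (real \<Rightarrow> real) \<Rightarrow> (real \<Rightarrow> real) \<Rightarrow> (real \<Rightarrow> real) \<Rightarrow> real \<Rightarrow> bool"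
  where "ivp_solution R \<phi> Q y D y0 \<longleftrightarrow> 0 < R \<and> 0 \<le> y0 \<and> y 0 = y0 \<and> D 0 = 1 \<and>
    (\<forall>s\<in>{0..<R}. 0 < \<phi> s \<and> 0 < Q s \<and> (y has_real_derivative D s) (at s within {0..<R}) \<and>
       ((\<lambda>s. \<phi> s * D s) has_real_derivative \<phi> s * Q s * y s) (at s within {0..<R}))"

lemma ivp_solutionD:
  assumes "ivp_solution R \<phi> Q y D y0"
  shows "0 < R" "0 \<le> y0" "y 0 = y0" "D 0 = 1"
    and "\<And>s. s \<in> {0..<R} \<Longrightarrow> 0 < \<phi> s"
    and "\<And>s. s \<in> {0..<R} \<Longrightarrow> 0 < Q s"
    and "\<And>s. s \<in> {0..<R} \<Longrightarrow> (y has_real_derivative D s) (at s within {0..<R})"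
    and "\<And>s. s \<in> {0..<R} \<Longrightarrow>
      ((\<lambda>s. \<phi> s * D s) has_real_derivative \<phi> s * Q s * y s) (at s within {0..<R})"
  using assms unfolding ivp_solution_def by blast+

lemma ivp_solution_deriv_pos:
  assumes sol: "ivp_solution R \<phi> Q y D y0" and s: "s \<in> {0..<R}"
  shows "0 < D s"
proof (rule ccontr)
  note sol = ivp_solutionD[OF sol]
  define g where "g = (\<lambda>s. \<phi> s * D s)"
  have g_deriv: "(g has_real_derivative \<phi> u * Q u * y u) (at u within {0..<R})"
    if "u \<in> {0..<R}" for u
    unfolding g_def by (rule sol(8)[OF that])
  have D_pos_iff: "0 < D u \<longleftrightarrow> 0 < g u" if "u \<in> {0..<R}" for u
    using sol(5)[OF that] by (simp add: g_def zero_less_mult_iff)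
  assume "\<not> 0 < D s"
  define Z where "Z = {0..s} \<inter> g -` {..0}"
  have sub: "{0..s} \<subseteq> {0..<R}" using s by auto
  have "closed Z" unfolding Z_def
    by (intro continuous_closed_preimage
        continuous_on_subset[OF DERIV_continuous_on[OF g_deriv] sub]) auto
  moreover have "s \<in> Z" using s \<open>\<not> 0 < D s\<close> D_pos_iff[OF s] by (auto simp: Z_def)
  moreover have "bdd_below Z" by (rule bdd_belowI[of _ 0]) (auto simp: Z_def)
  ultimately have "Inf Z \<in> Z" by (intro closed_contains_Inf) auto
  then obtain t where t: "t \<in> {0..s}" "g t \<le> 0" and first: "\<And>u. u \<in> {0..<t} \<Longrightarrow> 0 < g u"
    using cInf_lower[OF _ \<open>bdd_below Z\<close>] by (fastforce simp: Z_def)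
  \<comment> \<open>before the first zero of \<open>g\<close>, \<open>y\<close> increases, so \<open>y \<ge> y0 \<ge> 0\<close> and \<open>g\<close> increases too\<close>
  have y_ge: "y0 \<le> y u" if "u \<in> {0..t}" for u
  proof -
    have "y 0 \<le> y u"
    proof (rule DERIV_within_nonneg_imp_le[where S="{0..<R}", OF _ _ sol(7)])
      fix v assume "0 < v" "v < u"
      then show "0 \<le> D v" using that t s D_pos_iff[of v] first[of v] by auto
    qed (use that t s in auto)
    with sol(3) show ?thesis by simp
  qed
  have "g 0 \<le> g t"
  proof (intro DERIV_within_nonneg_imp_le[where S="{0..<R}", OF _ _ g_deriv])
    fix v assume "0 < v" "v < t"
    then have "v \<in> {0..<R}" "y0 \<le> y v" using y_ge[of v] t s by auto
    then show "0 \<le> \<phi> v * Q v * y v"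
      using sol(2,5,6) by (simp add: less_imp_le)
  qed (use t s in auto)
  moreover have "0 < g 0" using sol(1,4,5) by (simp add: g_def)
  ultimately show False using t(2) by simp
qed

lemma ivp_solution_strict_mono:
  assumes "ivp_solution R \<phi> Q y D y0"
  shows "strict_mono_on {0..<R} y"
proof (rule strict_mono_onI)
  fix x u assume "x \<in> {0..<R}" "u \<in> {0..<R}" "x < u"
  then show "y x < y u"
    by (intro DERIV_within_pos_imp_less[OF \<open>x < u\<close> _ ivp_solutionD(7)[OF assms]]
        ivp_solution_deriv_pos[OF assms]) auto
qed

lemma ivp_solution_gt_init:
  assumes "ivp_solution R \<phi> Q y D y0" and "s \<in> {0<..<R}"
  shows "y0 < y s"
  using strict_mono_onD[OF ivp_solution_strict_mono[OF assms(1)], of 0 s] assms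
  by (auto simp: ivp_solutionD(3)[OF assms(1)])

lemma ivp_solution_ge_init:
  assumes "ivp_solution R \<phi> Q y D y0" and "s \<in> {0..<R}"
  shows "y0 \<le> y s"
  using ivp_solution_gt_init[OF assms(1), of s] assms
  by (cases "s = 0") (auto simp: ivp_solutionD(3)[OF assms(1)])

lemma tendsto_ratio_same_derivative:
  fixes f g :: "real \<Rightarrow> real"
  assumes "f x = g x" and "D \<noteq> 0"
    and f: "(f has_real_derivative D) (at x within S)"
    and g: "(g has_real_derivative D) (at x within S)"
  shows "((\<lambda>s. g s / f s) \<longlongrightarrow> 1) (at x within S)"
proof (cases "f x = 0")
  case False
  have "((\<lambda>s. g s / f s) \<longlongrightarrow> g x / f x) (at x within S)"
    using DERIV_continuous[OF f] DERIV_continuous[OF g] False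
    by (intro tendsto_divide) (auto simp: continuous_within)
  with assms(1) False show ?thesis by simp
next
  case True
  \<comment> \<open>both functions vanish at \<open>x\<close>, so their ratio is that of their difference quotients\<close>
  have "((\<lambda>s. ((g s - g x) / (s - x)) / ((f s - f x) / (s - x))) \<longlongrightarrow> D / D) (at x within S)"
    using f g \<open>D \<noteq> 0\<close> by (intro tendsto_divide) (auto simp: has_field_derivative_iff)
  moreover have
    "\<forall>\<^sub>F s in at x within S. ((g s - g x) / (s - x)) / ((f s - f x) / (s - x)) = g s / f s"
    using True assms(1) by (auto simp: eventually_at_filter)
  ultimately show ?thesis
    using \<open>D \<noteq> 0\<close> by (auto intro: Lim_transform_eventually)
qed

lemma ivp_solution_less:
  assumes sol1: "ivp_solution R \<phi> Q1 y1 D1 y0" and sol2: "ivp_solution R \<phi> Q2 y2 D2 y0"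
    and Q_less: "\<And>s. s \<in> {0..<R} \<Longrightarrow> Q1 s < Q2 s"
    and r: "r \<in> {0<..<R}"
  shows "y1 r < y2 r"
proof -
  note s1 = ivp_solutionD[OF sol1] and s2 = ivp_solutionD[OF sol2]
  have y_pos: "0 < y1 s" "0 < y2 s" if "s \<in> {0<..<R}" for s
    using ivp_solution_gt_init[OF sol1 that] ivp_solution_gt_init[OF sol2 that] s1(2) by auto
  define W where "W = (\<lambda>s. \<phi> s * D2 s * y1 s - y2 s * (\<phi> s * D1 s))"
  have W_deriv: "(W has_real_derivative \<phi> s * (Q2 s - Q1 s) * y1 s * y2 s) (at s within {0..<R})"
    if "s \<in> {0..<R}" for s
    unfolding W_def
    by (rule DERIV_cong[OF DERIV_diff[OF DERIV_mult[OF s2(8) s1(7)] DERIV_mult[OF s2(7) s1(8)]]])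
       (use that in \<open>simp_all add: algebra_simps\<close>)
  have W_pos: "0 < W s" if "s \<in> {0<..<R}" for s
  proof -
    have "W 0 < W s"
      by (rule DERIV_within_pos_imp_less[OF _ _ W_deriv])
         (use that s1(5) Q_less y_pos in auto)
    with s1(3,4) s2(3,4) show ?thesis by (simp add: W_def)
  qed
  define h where "h = (\<lambda>s. y2 s / y1 s)"
  have h_deriv: "(h has_real_derivative (D2 s * y1 s - y2 s * D1 s) / (y1 s * y1 s))
      (at s within {0<..<R})" if "s \<in> {0<..<R}" for s
    unfolding h_def using that y_pos[OF that]
    by (intro DERIV_divide has_field_derivative_subset[OF s2(7)]
        has_field_derivative_subset[OF s1(7)]) auto
  have h_deriv_pos: "0 < (D2 s * y1 s - y2 s * D1 s) / (y1 s * y1 s)" if "s \<in> {0<..<R}" for s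
  proof -
    have "W s = \<phi> s * (D2 s * y1 s - y2 s * D1 s)" by (simp add: W_def algebra_simps)
    with W_pos[OF that] s1(5)[of s] that have "0 < D2 s * y1 s - y2 s * D1 s"
      by (simp add: zero_less_mult_iff)
    with y_pos[OF that] show ?thesis by simp
  qed
  have h_less: "h u < h v" if "0 < u" "u < v" "v < R" for u v
    by (rule DERIV_within_pos_imp_less[OF \<open>u < v\<close> _ h_deriv h_deriv_pos]) (use that in auto)
  have "at (0::real) within {0..r} = at_right 0"
    using r by (intro at_within_Icc_at_right) auto
  moreover have "(h \<longlongrightarrow> 1) (at 0 within {0..r})"
  proof -
    have "{0..r} \<subseteq> {0..<R}" "(0::real) \<in> {0..<R}" using r by auto
    then have "(y1 has_real_derivative 1) (at 0 within {0..r})"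
      "(y2 has_real_derivative 1) (at 0 within {0..r})"
      using has_field_derivative_subset[OF s1(7)] has_field_derivative_subset[OF s2(7)] s1(4) s2(4)
      by metis+
    then show ?thesis
      unfolding h_def using s1(3) s2(3) by (intro tendsto_ratio_same_derivative) auto
  qed
  ultimately have "(h \<longlongrightarrow> 1) (at_right 0)" by simp
  moreover have "\<forall>\<^sub>F s in at_right 0. h s \<le> h (r / 2)"
    unfolding eventually_at_right_field using r
    by (intro exI[of _ "r / 2"]) (auto intro!: less_imp_le h_less)
  ultimately have "1 \<le> h (r / 2)" by (rule tendsto_upperbound) simp
  also have "h (r / 2) < h r" using r by (intro h_less) auto
  finally show ?thesis using y_pos[OF r] by (simp add: h_def)
qed

lemma ivp_solution_ge_cubic:
  assumes sol: "ivp_solution R \<phi> Q y D y0" and "0 < m" and "0 \<le> c"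
    and bounds: "\<And>s. s \<in> {0..<R} \<Longrightarrow> m \<le> \<phi> s \<and> \<phi> s \<le> M \<and> c \<le> Q s"
    and r: "r \<in> {0..<R}"
  shows "c * m^2 / (6 * M^2) * r^3 \<le> y r"
proof -
  note y_deriv = ivp_solutionD(7)[OF sol] and g_deriv = ivp_solutionD(8)[OF sol]
  note sol = ivp_solutionD(1-6)[OF sol] ivp_solution_ge_init[OF sol]
  define g where "g = (\<lambda>s. \<phi> s * D s)"
  define k where "k = m / M"
  have "0 < M" using bounds[of 0] sol(1) \<open>0 < m\<close> by auto
  have "0 \<le> k" using \<open>0 < m\<close> \<open>0 < M\<close> by (simp add: k_def)
  have sub: "{0..s} \<subseteq> {0..<R}" if "s \<in> {0..<R}" for s using that by auto
  have D_ge: "b / M \<le> D s" if s: "s \<in> {0..<R}" and "0 \<le> b" "b \<le> g s" for s b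
  proof -
    have "b / M \<le> b / \<phi> s"
      using bounds[OF s] sol(5)[OF s] \<open>0 \<le> b\<close> by (intro divide_left_mono) auto
    also have "\<dots> \<le> D s"
      using \<open>b \<le> g s\<close> sol(5)[OF s] by (simp add: g_def pos_divide_le_eq mult.commute)
    finally show ?thesis .
  qed
  have source_nonneg: "0 \<le> \<phi> u * Q u * y u" if "u \<in> {0..<R}" for u
    using sol(2) sol(5-7)[OF that] by (simp add: less_imp_le)
  \<comment> \<open>each integration of the equation gains one power of \<open>s\<close>\<close>
  have g_ge: "m \<le> g s" if "s \<in> {0..<R}" for s
  proof -
    have "g 0 \<le> g s"
      unfolding g_def
      by (rule DERIV_within_nonneg_imp_le[OF _ sub[OF that] g_deriv source_nonneg])
         (use that in auto)
    with bounds[of 0] sol(1,4) show ?thesis by (simp add: g_def)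
  qed
  have y_ge: "k * s \<le> y s" if "s \<in> {0..<R}" for s
    using DERIV_ge_power_imp_ge[OF _ sub[OF that] _ y_deriv, of k 0] that sol(2,3)
      D_ge[OF _ _ g_ge] \<open>0 < m\<close> by (force simp: k_def)
  have g_ge': "m * c * k * s ^ Suc 1 / Suc 1 \<le> g s" if "s \<in> {0..<R}" for s
    unfolding g_def
  proof (rule DERIV_ge_power_imp_ge[OF _ sub[OF that] _ g_deriv])
    fix u assume "0 < u" "u < s"
    then have u: "u \<in> {0..<R}" using that by auto
    have "m * c \<le> \<phi> u * Q u"
      using bounds[OF u] \<open>0 < m\<close> \<open>0 \<le> c\<close> by (intro mult_mono) auto
    moreover have "k * u \<le> y u" using y_ge[OF u] .
    moreover have "0 \<le> \<phi> u * Q u" using sol(5,6)[OF u] by simp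
    moreover have "0 \<le> k * u" using \<open>0 \<le> k\<close> u by simp
    ultimately have "m * c * (k * u) \<le> \<phi> u * Q u * y u" by (rule mult_mono)
    then show "m * c * k * u ^ 1 \<le> \<phi> u * Q u * y u" by (simp add: mult.assoc)
  qed (use that sol(4) sol(5)[of 0] in auto)
  have "m * c * k / M / 2 * r ^ Suc 2 / Suc 2 \<le> y r"
  proof (rule DERIV_ge_power_imp_ge[OF _ sub[OF r] _ y_deriv])
    fix u assume "0 < u" "u < r"
    then have u: "u \<in> {0..<R}" using r by auto
    have "0 \<le> m * c * k * u ^ Suc 1 / Suc 1"
      using \<open>0 < m\<close> \<open>0 \<le> c\<close> \<open>0 \<le> k\<close> by simp
    from D_ge[OF u this g_ge'[OF u]]
    show "m * c * k / M / 2 * u ^ 2 \<le> D u" by (simp add: power2_eq_square mult.commute)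
  qed (use r sol(2,3) in auto)
  then show ?thesis
    using \<open>0 < M\<close> by (simp add: k_def power2_eq_square field_simps)
qed

lemma DERIV_reflect:
  assumes "(f has_real_derivative f') (at (a - s) within T)" and "(\<lambda>s. a - s) ` S \<subseteq> T"
  shows "((\<lambda>s. f (a - s)) has_real_derivative - f') (at s within S)"
proof -
  have "((\<lambda>s. a - s) has_real_derivative -1) (at s within S)"
    by (rule derivative_eq_intros refl | simp)+
  from DERIV_image_chain[OF has_field_derivative_subset[OF assms] this] show ?thesis
    by (simp add: o_def)
qed

lemma DERIV_flux_of_ode:
  assumes "(\<phi> has_real_derivative \<phi>') (at s within S)" "(D has_real_derivative DD) (at s within S)"
    and "\<phi> s \<noteq> 0" and "DD + \<phi>' / \<phi> s * D s + (q - B) * y = 0"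
  shows "((\<lambda>s. \<phi> s * D s) has_real_derivative \<phi> s * (B - q) * y) (at s within S)"
proof -
  have "\<phi>' * D s + DD * \<phi> s = \<phi> s * (B - q) * y"
    using assms(3,4) by (simp add: field_simps)
  with DERIV_mult[OF assms(1,2)] show ?thesis by simp
qed

lemma ivp_solution_of_ode:
  assumes "0 < R" "0 \<le> y0" "y 0 = y0" "D 0 = 1"
    and "\<And>s. s \<in> {0..<R} \<Longrightarrow> 0 < \<phi> s \<and> q s < B"
    and \<phi>': "\<And>s. s \<in> {0..<R} \<Longrightarrow> (\<phi> has_real_derivative \<phi>' s) (at s within {0..<R})"
    and "\<And>s. s \<in> {0..<R} \<Longrightarrow> (y has_real_derivative D s) (at s within {0..<R})"
    and D': "\<And>s. s \<in> {0..<R} \<Longrightarrow> (D has_real_derivative DD s) (at s within {0..<R})"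
    and ode: "\<And>s. s \<in> {0..<R} \<Longrightarrow> DD s + \<phi>' s / \<phi> s * D s + (q s - B) * y s = 0"
  shows "ivp_solution R \<phi> (\<lambda>s. B - q s) y D y0"
  unfolding ivp_solution_def
  using assms DERIV_flux_of_ode[OF \<phi>' D' _ ode] by force

lemma ivp_solution_of_terminal_ode:
  assumes "R < a" "0 \<le> y0" "y a = y0" "D a = -1"
    and "\<And>r. r \<in> {R<..a} \<Longrightarrow> 0 < \<phi> r \<and> q r < B"
    and \<phi>': "\<And>r. r \<in> {R<..a} \<Longrightarrow> (\<phi> has_real_derivative \<phi>' r) (at r within {R<..a})"
    and y': "\<And>r. r \<in> {R<..a} \<Longrightarrow> (y has_real_derivative D r) (at r within {R<..a})"
    and D': "\<And>r. r \<in> {R<..a} \<Longrightarrow> (D has_real_derivative DD r) (at r within {R<..a})"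
    and ode: "\<And>r. r \<in> {R<..a} \<Longrightarrow> DD r + \<phi>' r / \<phi> r * D r + (q r - B) * y r = 0"
  shows "ivp_solution (a - R) (\<lambda>s. \<phi> (a - s)) (\<lambda>s. B - q (a - s))
    (\<lambda>s. y (a - s)) (\<lambda>s. - D (a - s)) y0"
proof (rule ivp_solution_of_ode[where \<phi>'="\<lambda>s. - \<phi>' (a - s)" and DD="\<lambda>s. DD (a - s)"])
  have img: "(\<lambda>s. a - s) ` {0..<a - R} \<subseteq> {R<..a}" by auto
  fix s assume "s \<in> {0..<a - R}"
  then have r: "a - s \<in> {R<..a}" by auto
  show "((\<lambda>s. \<phi> (a - s)) has_real_derivative - \<phi>' (a - s)) (at s within {0..<a - R})"
    by (rule DERIV_reflect[OF \<phi>'[OF r] img])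
  show "((\<lambda>s. y (a - s)) has_real_derivative - D (a - s)) (at s within {0..<a - R})"
    by (rule DERIV_reflect[OF y'[OF r] img])
  show "((\<lambda>s. - D (a - s)) has_real_derivative DD (a - s)) (at s within {0..<a - R})"
    using DERIV_minus[OF DERIV_reflect[OF D'[OF r] img]] by simp
  show "DD (a - s) + - \<phi>' (a - s) / \<phi> (a - s) * - D (a - s) + (q (a - s) - B) * y (a - s) = 0"
    using ode[OF r] by simp
qed (use assms in auto)

lemma C2_weight_bounds:
  fixes \<psi> \<psi>' \<psi>'' :: "real \<Rightarrow> real"
  assumes "0 \<le> a"
    and "\<And>r. r \<in> {0..a} \<Longrightarrow> (\<psi> has_real_derivative \<psi>' r) (at r within {0..a})"
    and "\<And>r. r \<in> {0..a} \<Longrightarrow> (\<psi>' has_real_derivative \<psi>'' r) (at r within {0..a})"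
    and "continuous_on {0..a} \<psi>''"
    and pos: "\<And>r. r \<in> {0..a} \<Longrightarrow> 0 < \<psi> r"
  obtains m M where "0 < m" and "\<And>r. r \<in> {0..a} \<Longrightarrow> m \<le> \<psi> r \<and> \<psi> r \<le> M"
    and "\<And>r. r \<in> {0..a} \<Longrightarrow>
      \<bar>\<psi>'' r / \<psi> r - (\<psi>' r / \<psi> r)^2\<bar> \<le> (SUP r\<in>{0..a}. \<bar>\<psi>'' r / \<psi> r - (\<psi>' r / \<psi> r)^2\<bar>)"
proof -
  have cont: "continuous_on {0..a} \<psi>" "continuous_on {0..a} \<psi>'"
    using assms(2,3) by (blast intro: DERIV_continuous_on)+
  have "{0..a} \<noteq> {}" using \<open>0 \<le> a\<close> by simp
  obtain r0 where "r0 \<in> {0..a}" "\<And>r. r \<in> {0..a} \<Longrightarrow> \<psi> r0 \<le> \<psi> r"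
    using continuous_attains_inf[OF compact_Icc \<open>{0..a} \<noteq> {}\<close> cont(1)] by blast
  moreover obtain r1 where "\<And>r. r \<in> {0..a} \<Longrightarrow> \<psi> r \<le> \<psi> r1"
    using continuous_attains_sup[OF compact_Icc \<open>{0..a} \<noteq> {}\<close> cont(1)] by blast
  moreover have "continuous_on {0..a} (\<lambda>r. \<bar>\<psi>'' r / \<psi> r - (\<psi>' r / \<psi> r)^2\<bar>)"
    using cont assms(4) pos by (intro continuous_intros) force+
  then have "bdd_above ((\<lambda>r. \<bar>\<psi>'' r / \<psi> r - (\<psi>' r / \<psi> r)^2\<bar>) ` {0..a})"
    by (intro bounded_imp_bdd_above compact_imp_bounded compact_continuous_image compact_Icc)
  ultimately show ?thesis
    using pos by (intro that[of "\<psi> r0" "\<psi> r1"] cSUP_upper) auto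
qed

lemma ivp_solution_family_strict_mono:
  fixes y D :: "real \<Rightarrow> real \<Rightarrow> real"
  assumes sol: "\<And>B. Bbar < B \<Longrightarrow> ivp_solution R \<phi> (\<lambda>s. B - q s) (\<lambda>s. y s B) (\<lambda>s. D s B) y0"
    and "r \<in> {0<..<R}"
  shows "strict_mono_on {Bbar<..} (\<lambda>B. y r B)"
  using assms by (intro strict_mono_onI ivp_solution_less[OF sol sol]) auto

lemma ivp_solution_family_at_top:
  fixes y D :: "real \<Rightarrow> real \<Rightarrow> real"
  assumes "0 < m"
    and bounds: "\<And>s. s \<in> {0..<R} \<Longrightarrow> m \<le> \<phi> s \<and> \<phi> s \<le> M \<and> \<bar>q s\<bar> \<le> Bbar"
    and sol: "\<And>B. Bbar < B \<Longrightarrow> ivp_solution R \<phi> (\<lambda>s. B - q s) (\<lambda>s. y s B) (\<lambda>s. D s B) y0"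
    and r: "r \<in> {0<..<R}"
  shows "filterlim (\<lambda>B. y r B) at_top at_top"
proof (rule filterlim_at_top_mono)
  define K where "K = m^2 / (6 * M^2) * r^3"
  have "0 < M" using bounds[of 0] r \<open>0 < m\<close> by auto
  with \<open>0 < m\<close> r have "0 < K" by (simp add: K_def)
  have "filterlim (\<lambda>B. - Bbar + B) at_top at_top"
    by (rule filterlim_tendsto_add_at_top[OF tendsto_const filterlim_ident])
  then show "filterlim (\<lambda>B. K * (B - Bbar)) at_top at_top"
    using filterlim_tendsto_pos_mult_at_top[OF tendsto_const \<open>0 < K\<close>] by simp
  show "\<forall>\<^sub>F B in at_top. K * (B - Bbar) \<le> y r B"
    using eventually_gt_at_top[of Bbar]
  proof eventually_elim
    case (elim B)
    have "(B - Bbar) * m^2 / (6 * M^2) * r^3 \<le> y r B"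
      using r bounds \<open>0 < m\<close> elim
      by (intro ivp_solution_ge_cubic[OF sol[OF elim]]) (auto simp: abs_le_iff)
    then show ?case by (simp add: K_def algebra_simps)
  qed
qed

lemma ivp_solution_reflected_family:
  fixes y D :: "real \<Rightarrow> real \<Rightarrow> real"
  assumes "0 < m"
    and bounds: "\<And>s. s \<in> {0..<a - R} \<Longrightarrow> m \<le> \<phi> (a - s) \<and> \<phi> (a - s) \<le> M \<and> \<bar>q (a - s)\<bar> \<le> Bbar"
    and sol: "\<And>B. Bbar < B \<Longrightarrow>
      ivp_solution (a - R) (\<lambda>s. \<phi> (a - s)) (\<lambda>s. B - q (a - s)) (\<lambda>s. y (a - s) B) (\<lambda>s. D s B) y0"
  shows "\<And>B r. Bbar < B \<Longrightarrow> r \<in> {R<..<a} \<Longrightarrow> y0 < y r B"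
    and "\<And>B r s. Bbar < B \<Longrightarrow> r \<in> {R<..<a} \<Longrightarrow> s \<in> {R<..<a} \<Longrightarrow> r < s \<Longrightarrow> y s B < y r B"
    and "\<And>r. r \<in> {R<..<a} \<Longrightarrow> strict_mono_on {Bbar<..} (\<lambda>B. y r B)"
    and "\<And>r. r \<in> {R<..<a} \<Longrightarrow> filterlim (\<lambda>B. y r B) at_top at_top"
proof -
  fix B r s assume "Bbar < B" "r \<in> {R<..<a}"
  then show "y0 < y r B"
    using ivp_solution_gt_init[OF sol, of B "a - r"] by auto
  assume "s \<in> {R<..<a}" "r < s"
  then show "y s B < y r B"
    using strict_mono_onD[OF ivp_solution_strict_mono[OF sol[OF \<open>Bbar < B\<close>]], of "a - s" "a - r"]
      \<open>r \<in> {R<..<a}\<close> by auto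
next
  fix r assume "r \<in> {R<..<a}"
  then show "strict_mono_on {Bbar<..} (\<lambda>B. y r B)"
    using ivp_solution_family_strict_mono[OF sol, where r="a - r"] by auto
  show "filterlim (\<lambda>B. y r B) at_top at_top"
    using ivp_solution_family_at_top[OF \<open>0 < m\<close> bounds sol, where r="a - r"] \<open>r \<in> {R<..<a}\<close> by auto
qed

theorem lemma5p4:
  fixes a R1 R2 \<beta> Bbar :: real
    and \<psi> \<psi>' \<psi>'' :: "real \<Rightarrow> real"
    and z1 d1 dd1 z2 d2 dd2 :: "real \<Rightarrow> real \<Rightarrow> real"
  assumes a_pos: "a > 0"
    and R: "0 < R1" "R1 < R2" "R2 < a"
    and beta_pos: "\<beta> > 0"
    and psi_d1: "\<And>r. r \<in> {0..a} \<Longrightarrow> (\<psi> has_real_derivative \<psi>' r) (at r within {0..a})"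
    and psi_d2: "\<And>r. r \<in> {0..a} \<Longrightarrow> (\<psi>' has_real_derivative \<psi>'' r) (at r within {0..a})"
    and psi_C2: "continuous_on {0..a} \<psi>''"
    and psi_pos: "\<And>r. r \<in> {0..a} \<Longrightarrow> \<psi> r > 0"
    and Bbar_def: "Bbar = (SUP r\<in>{0..a}. \<bar>\<psi>'' r / \<psi> r - (\<psi>' r / \<psi> r)^2\<bar>)"
    and z1_d1: "\<And>B r. B > Bbar \<Longrightarrow> r \<in> {0..<R1} \<Longrightarrow>
        ((\<lambda>s. z1 s B) has_real_derivative d1 r B) (at r within {0..<R1})"
    and z1_d2: "\<And>B r. B > Bbar \<Longrightarrow> r \<in> {0..<R1} \<Longrightarrow>
        ((\<lambda>s. d1 s B) has_real_derivative dd1 r B) (at r within {0..<R1})"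
    and z1_ode: "\<And>B r. B > Bbar \<Longrightarrow> r \<in> {0..<R1} \<Longrightarrow>
        dd1 r B + (\<psi>' r / \<psi> r) * d1 r B
          + ((\<psi>'' r / \<psi> r - (\<psi>' r / \<psi> r)^2) - B) * z1 r B = 0"
    and z1_init: "\<And>B. B > Bbar \<Longrightarrow> z1 0 B = 0 \<and> d1 0 B = 1"
    and z2_d1: "\<And>B r. B > Bbar \<Longrightarrow> r \<in> {R2<..a} \<Longrightarrow>
        ((\<lambda>s. z2 s B) has_real_derivative d2 r B) (at r within {R2<..a})"
    and z2_d2: "\<And>B r. B > Bbar \<Longrightarrow> r \<in> {R2<..a} \<Longrightarrow>
        ((\<lambda>s. d2 s B) has_real_derivative dd2 r B) (at r within {R2<..a})"
    and z2_ode: "\<And>B r. B > Bbar \<Longrightarrow> r \<in> {R2<..a} \<Longrightarrow>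
        dd2 r B + (\<psi>' r / \<psi> r) * d2 r B
          + ((\<psi>'' r / \<psi> r - (\<psi>' r / \<psi> r)^2) - B) * z2 r B = 0"
    and z2_init: "\<And>B. B > Bbar \<Longrightarrow> z2 a B = \<beta> \<and> d2 a B = -1"
  shows "(\<forall>B>Bbar. \<forall>r\<in>{0<..<R1}. z1 r B > 0)
    \<and> (\<forall>B>Bbar. strict_mono_on {0..<R1} (\<lambda>r. z1 r B))
    \<and> (\<forall>r\<in>{0<..<R1}. strict_mono_on {Bbar<..} (\<lambda>B. z1 r B))
    \<and> (\<forall>r\<in>{0<..<R1}. filterlim (\<lambda>B. z1 r B) at_top at_top)
    \<and> (\<forall>B>Bbar. \<forall>r\<in>{R2<..<a}. z2 r B > \<beta>)
    \<and> (\<forall>B>Bbar. \<forall>r\<in>{R2<..<a}. \<forall>s\<in>{R2<..<a}. r < s \<longrightarrow> z2 s B < z2 r B)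
    \<and> (\<forall>r\<in>{R2<..<a}. strict_mono_on {Bbar<..} (\<lambda>B. z2 r B))
    \<and> (\<forall>r\<in>{R2<..<a}. filterlim (\<lambda>B. z2 r B) at_top at_top)"
proof -
  define q where "q r = \<psi>'' r / \<psi> r - (\<psi>' r / \<psi> r)^2" for r
  obtain m M where "0 < m" and psi_bounds: "\<And>r. r \<in> {0..a} \<Longrightarrow> m \<le> \<psi> r \<and> \<psi> r \<le> M"
    and q_bound: "\<And>r. r \<in> {0..a} \<Longrightarrow> \<bar>q r\<bar> \<le> Bbar"
    using C2_weight_bounds[OF _ psi_d1 psi_d2 psi_C2 psi_pos] a_pos unfolding Bbar_def q_def by auto
  have q_less: "q r < B" if "r \<in> {0..a}" "Bbar < B" for r B
    using q_bound[OF that(1)] that(2) by linarith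
  have psi_d1': "(\<psi> has_real_derivative \<psi>' r) (at r within S)" if "S \<subseteq> {0..a}" "r \<in> S" for r S
    using has_field_derivative_subset[OF psi_d1] that by blast
  have sub: "{0..<R1} \<subseteq> {0..a}" "{R2<..a} \<subseteq> {0..a}" using R by auto
  have sol1: "ivp_solution R1 \<psi> (\<lambda>s. B - q s) (\<lambda>s. z1 s B) (\<lambda>s. d1 s B) 0" if "Bbar < B" for B
    using R that z1_init z1_d1 z1_d2 z1_ode psi_pos q_less psi_d1'[OF sub(1)]
    by (intro ivp_solution_of_ode[where \<phi>'=\<psi>' and DD="\<lambda>s. dd1 s B"]) (auto simp: q_def)
  have sol2: "ivp_solution (a - R2) (\<lambda>s. \<psi> (a - s)) (\<lambda>s. B - q (a - s))
      (\<lambda>s. z2 (a - s) B) (\<lambda>s. - d2 (a - s) B) \<beta>" if "Bbar < B" for B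
    using R beta_pos that z2_init z2_d1 z2_d2 z2_ode psi_pos q_less psi_d1'[OF sub(2)]
    by (intro ivp_solution_of_terminal_ode[where \<phi>'=\<psi>' and DD="\<lambda>r. dd2 r B"]) (auto simp: q_def)
  have bounds_left: "\<And>s. s \<in> {0..<R1} \<Longrightarrow> m \<le> \<psi> s \<and> \<psi> s \<le> M \<and> \<bar>q s\<bar> \<le> Bbar"
    and bounds_right: "\<And>s. s \<in> {0..<a - R2} \<Longrightarrow> m \<le> \<psi> (a - s) \<and> \<psi> (a - s) \<le> M \<and> \<bar>q (a - s)\<bar> \<le> Bbar"
    using psi_bounds q_bound R by auto
  note left = ivp_solution_gt_init[OF sol1] ivp_solution_strict_mono[OF sol1]
    ivp_solution_family_strict_mono[OF sol1] ivp_solution_family_at_top[OF \<open>0 < m\<close> bounds_left sol1]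
  note right = ivp_solution_reflected_family[OF \<open>0 < m\<close> bounds_right sol2]
  show ?thesis
    by (intro conjI allI impI ballI left right) auto
qed

end
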